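(* Let the labels $\{1,\dots,k\}$ be partitioned into $b\ge2$ blocks all of size $s=k/b\ge2$, let $L_{01}(i,j)=[i\ne j]$, $L_{01,b}(i,j)=[i\text{ and }j\text{ not in the same block}]$, and for $0\le\eta\le1$ let $L_{01,b,\eta}=\eta L_{01}+(1-\eta)L_{01,b}$, with quadratic surrogate $\Phi_{quad}(f,y)=\frac1{2k}\|f+L_{01,b,\eta}(:,y)\|_2^2$. If the scores are constrained to be equal inside the blocks, i.e. to lie in $\mathcal{F}_{01,b}=\mathrm{span}(L_{01,b})$, then $$H_{\Phi_{quad},L_{01,b,\eta},\mathcal{F}_{01,b}}(\varepsilon)=\begin{cases}\dfrac{(\varepsilon-\frac\eta2)^2}{4b}\cdot\dfrac{(\frac{\eta b}{k}+1-\eta)^2}{(1-\frac\eta2)^2}, & \frac\eta2\le\varepsilon\le1,\\[2mm] 0, & 0\le\varepsilon\le\frac\eta2,\end{cases}$$ so the surrogate is consistent up to level $\frac\eta2$.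
   Context: $\mathrm{span}(L)$ is the column space. $\mathrm{pred}(f)$ is the smallest index maximizing $f_c$. For $q\in\Delta_k$: $\ell(f,q)=\sum_cq_cL(\mathrm{pred}(f),c)$, $\phi(f,q)=\sum_cq_c\Phi(f,c)$, $\delta\ell(f,q)=\ell(f,q)-\inf_{\hat f\in\mathcal{F}}\ell(\hat f,q)$, $\delta\phi(f,q)=\phi(f,q)-\inf_{\hat f\in\mathcal{F}}\phi(\hat f,q)$; calibration function $H_{\Phi,L,\mathcal{F}}(\varepsilon)=\inf\{\delta\phi(f,q):f\in\mathcal{F},q\in\Delta_k,\delta\ell(f,q)\ge\varepsilon\}$ ($+\infty$ if empty). A surrogate is consistent up to level $\eta'\ge0$ if $H(\varepsilon)>0$ for all $\varepsilon>\eta'$ and $H(\hat\varepsilon)$ is finite for some $\hat\varepsilon>\eta'$. *)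

theory Defs
  imports "HOL-Analysis.Analysis"
begin

text \<open>Labels are 0..k-1 (the paper's 1..k shifted by one; order preserved).
  Score vectors, loss columns and distributions are functions nat => real,
  only their values below k matter.  A loss matrix is L :: nat => nat => real,
  L i j = loss of predicting i when the true label is j.\<close>

definition pred :: "nat \<Rightarrow> (nat \<Rightarrow> real) \<Rightarrow> nat" where
  "pred k f = (LEAST c. c < k \<and> (\<forall>c'<k. f c' \<le> f c))"

definition label_simplex :: "nat \<Rightarrow> (nat \<Rightarrow> real) set" where
  "label_simplex k = {q. (\<forall>c<k. 0 \<le> q c) \<and> (\<Sum>c<k. q c) = 1 \<and> (\<forall>c\<ge>k. q c = 0)}"

definition col_span :: "nat \<Rightarrow> (nat \<Rightarrow> nat \<Rightarrow> real) \<Rightarrow> (nat \<Rightarrow> real) set" where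
  "col_span k L = {f. (\<exists>\<alpha>::nat \<Rightarrow> real. \<forall>c<k. f c = (\<Sum>j<k. \<alpha> j * L c j)) \<and> (\<forall>c\<ge>k. f c = 0)}"

definition lossq :: "nat \<Rightarrow> (nat \<Rightarrow> nat \<Rightarrow> real) \<Rightarrow> (nat \<Rightarrow> real) \<Rightarrow> (nat \<Rightarrow> real) \<Rightarrow> real" where
  "lossq k L f q = (\<Sum>c<k. q c * L (pred k f) c)"

definition phiq :: "nat \<Rightarrow> ((nat \<Rightarrow> real) \<Rightarrow> nat \<Rightarrow> real) \<Rightarrow> (nat \<Rightarrow> real) \<Rightarrow> (nat \<Rightarrow> real) \<Rightarrow> real" where
  "phiq k \<Phi> f q = (\<Sum>c<k. q c * \<Phi> f c)"

definition excess_loss :: "nat \<Rightarrow> (nat \<Rightarrow> nat \<Rightarrow> real) \<Rightarrow> (nat \<Rightarrow> real) set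
    \<Rightarrow> (nat \<Rightarrow> real) \<Rightarrow> (nat \<Rightarrow> real) \<Rightarrow> ereal" where
  "excess_loss k L F f q = ereal (lossq k L f q) - (INF g\<in>F. ereal (lossq k L g q))"

definition excess_phi :: "nat \<Rightarrow> ((nat \<Rightarrow> real) \<Rightarrow> nat \<Rightarrow> real) \<Rightarrow> (nat \<Rightarrow> real) set
    \<Rightarrow> (nat \<Rightarrow> real) \<Rightarrow> (nat \<Rightarrow> real) \<Rightarrow> ereal" where
  "excess_phi k \<Phi> F f q = ereal (phiq k \<Phi> f q) - (INF g\<in>F. ereal (phiq k \<Phi> g q))"

text \<open>Calibration function H (value +infinity when the set is empty).\<close>
definition calib :: "nat \<Rightarrow> ((nat \<Rightarrow> real) \<Rightarrow> nat \<Rightarrow> real) \<Rightarrow> (nat \<Rightarrow> nat \<Rightarrow> real)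
    \<Rightarrow> (nat \<Rightarrow> real) set \<Rightarrow> real \<Rightarrow> ereal" where
  "calib k \<Phi> L F \<epsilon> = Inf {excess_phi k \<Phi> F f q | f q.
       f \<in> F \<and> q \<in> label_simplex k \<and> excess_loss k L F f q \<ge> ereal \<epsilon>}"

definition consistent_upto :: "nat \<Rightarrow> ((nat \<Rightarrow> real) \<Rightarrow> nat \<Rightarrow> real) \<Rightarrow> (nat \<Rightarrow> nat \<Rightarrow> real)
    \<Rightarrow> (nat \<Rightarrow> real) set \<Rightarrow> real \<Rightarrow> bool" where
  "consistent_upto k \<Phi> L F \<eta>' \<longleftrightarrow>
     (\<forall>\<epsilon>>\<eta>'. calib k \<Phi> L F \<epsilon> > 0) \<and>
     (\<exists>\<epsilon>'>\<eta>'. \<bar>calib k \<Phi> L F \<epsilon>'\<bar> \<noteq> \<infinity>)"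

definition L01 :: "nat \<Rightarrow> nat \<Rightarrow> real" where
  "L01 i j = (if i \<noteq> j then 1 else 0)"

definition L01b :: "(nat \<Rightarrow> nat) \<Rightarrow> nat \<Rightarrow> nat \<Rightarrow> real" where
  "L01b blk i j = (if blk i \<noteq> blk j then 1 else 0)"

definition L01b_eta :: "(nat \<Rightarrow> nat) \<Rightarrow> real \<Rightarrow> nat \<Rightarrow> nat \<Rightarrow> real" where
  "L01b_eta blk \<eta> i j = \<eta> * L01 i j + (1 - \<eta>) * L01b blk i j"

definition Phi_quad :: "nat \<Rightarrow> (nat \<Rightarrow> nat \<Rightarrow> real) \<Rightarrow> (nat \<Rightarrow> real) \<Rightarrow> nat \<Rightarrow> real" where
  "Phi_quad k L f y = (1 / (2 * real k)) * (\<Sum>c<k. (f c + L c y)\<^sup>2)"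

end

theory Submission
  imports Defs
begin

text \<open>Scores in the column span of \<open>L01b\<close> are exactly the block-constant vectors, and the
  quadratic surrogate is minimised over them by the projection \<open>f\<^sup>* c = \<alpha> Q (blk c) - 1\<close>,
  where \<open>Q B\<close> is the mass that \<open>q\<close> puts on block \<open>B\<close> and \<open>\<alpha> = \<eta>/s + 1 - \<eta>\<close>.
  Writing a score as \<open>h \<circ> blk\<close>, the excess surrogate risk is therefore
  \<open>(1/2b) \<Sum>\<^sub>B (h B + 1 - \<alpha> Q B)\<^sup>2\<close>.
  An excess loss \<open>\<epsilon> > \<eta>/2\<close> forces the predicted block to carry at least
  \<open>m = (\<epsilon> - \<eta>/2)/(1 - \<eta>/2)\<close> less mass than the block of an optimal prediction, although \<open>h\<close> is
  at least as large on it; the two corresponding terms then contribute at least \<open>(\<alpha> m)\<^sup>2/(4b)\<close>.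
  A distribution supported on one label of each of two blocks, with \<open>h\<close> raised by \<open>\<alpha>/2\<close> on
  both blocks, attains this bound.\<close>

lemma pred_spec:
  assumes "0 < k"
  shows "pred k f < k" and "c < k \<Longrightarrow> f c \<le> f (pred k f)"
proof -
  have "Max (f ` {..<k}) \<in> f ` {..<k}"
    using assms by (intro Max_in) auto
  then obtain m where "m < k" and "f m = Max (f ` {..<k})" by auto
  then have "\<exists>m. m < k \<and> (\<forall>c<k. f c \<le> f m)"
    by (metis Max_ge finite_imageI finite_lessThan image_eqI lessThan_iff)
  from LeastI_ex[OF this] show "pred k f < k" and "c < k \<Longrightarrow> f c \<le> f (pred k f)"
    unfolding pred_def by blast+
qed

lemma pred_le: "c < k \<Longrightarrow> (\<And>c'. c' < k \<Longrightarrow> f c' \<le> f c) \<Longrightarrow> pred k f \<le> c"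
  unfolding pred_def by (rule Least_le) auto

definition cond_loss :: "nat \<Rightarrow> (nat \<Rightarrow> nat \<Rightarrow> real) \<Rightarrow> (nat \<Rightarrow> real) \<Rightarrow> nat \<Rightarrow> real" where
  "cond_loss k L q i = (\<Sum>y<k. q y * L i y)"

lemma lossq_eq_cond_loss: "lossq k L f q = cond_loss k L q (pred k f)"
  unfolding lossq_def cond_loss_def by (simp add: mult.commute)

lemma excess_loss_ge_diff:
  "g \<in> F \<Longrightarrow> ereal (lossq k L f q - lossq k L g q) \<le> excess_loss k L F f q"
  unfolding excess_loss_def
  by (metis INF_lower ereal_minus(1) ereal_minus_mono order_refl)

lemma excess_loss_attained:
  assumes "0 < k" and "F \<noteq> {}"
  obtains g where "g \<in> F" and "excess_loss k L F f q = ereal (lossq k L f q - lossq k L g q)"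
proof -
  let ?A = "(\<lambda>g. ereal (lossq k L g q)) ` F"
  have "?A \<subseteq> (\<lambda>i. ereal (cond_loss k L q i)) ` {..<k}"
    using pred_spec(1)[OF assms(1)] by (auto simp: lossq_eq_cond_loss)
  then have "finite ?A" by (rule finite_subset) simp
  then have "Inf ?A \<in> ?A"
    using assms(2) by (intro finite_Inf_in) (auto simp: inf_min min_def)
  then obtain g where "g \<in> F" "(INF g\<in>F. ereal (lossq k L g q)) = ereal (lossq k L g q)"
    by auto
  then show thesis
    using that unfolding excess_loss_def by simp
qed

lemma excess_phi_nonneg:
  assumes "f \<in> F"
  shows "0 \<le> excess_phi k \<Phi> F f q"
proof -
  have "(INF g\<in>F. ereal (phiq k \<Phi> g q)) \<le> ereal (phiq k \<Phi> f q)"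
    using assms by (rule INF_lower)
  then show ?thesis
    unfolding excess_phi_def by (cases "INF g\<in>F. ereal (phiq k \<Phi> g q)") auto
qed

lemma calib_mono:
  assumes "\<epsilon> \<le> \<epsilon>'"
  shows "calib k \<Phi> L F \<epsilon> \<le> calib k \<Phi> L F \<epsilon>'"
proof -
  from assms have "ereal \<epsilon> \<le> ereal \<epsilon>'" by simp
  then show ?thesis
    unfolding calib_def by (intro Inf_superset_mono) (use order_trans in blast)
qed

lemma calib_nonneg: "0 \<le> calib k \<Phi> L F \<epsilon>"
  unfolding calib_def by (rule Inf_greatest) (auto intro: excess_phi_nonneg)

lemma calib_le_excess_phi:
  "f \<in> F \<Longrightarrow> q \<in> label_simplex k \<Longrightarrow> ereal \<epsilon> \<le> excess_loss k L F f q
     \<Longrightarrow> calib k \<Phi> L F \<epsilon> \<le> excess_phi k \<Phi> F f q"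
  unfolding calib_def by (rule Inf_lower) blast

lemma calib_geI:
  assumes "\<And>f q. f \<in> F \<Longrightarrow> q \<in> label_simplex k \<Longrightarrow> ereal \<epsilon> \<le> excess_loss k L F f q
             \<Longrightarrow> v \<le> excess_phi k \<Phi> F f q"
  shows "v \<le> calib k \<Phi> L F \<epsilon>"
  unfolding calib_def by (rule Inf_greatest) (use assms in blast)

lemma phiq_Phi_quad_diff:
  assumes q1: "(\<Sum>y<k. q y) = 1"
  shows "phiq k (Phi_quad k L) f q - phiq k (Phi_quad k L) g q
     = (\<Sum>c<k. (f c - g c)\<^sup>2 + 2 * (f c - g c) * (g c + cond_loss k L q c)) / (2 * real k)"
proof -
  have square_diff: "(f c + L c y)\<^sup>2 - (g c + L c y)\<^sup>2
      = (f c - g c)\<^sup>2 + 2 * (f c - g c) * (g c + L c y)" for c y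
    by (simp add: power2_eq_square algebra_simps)
  have "phiq k (Phi_quad k L) f q - phiq k (Phi_quad k L) g q
      = (\<Sum>y<k. q y * (\<Sum>c<k. (f c + L c y)\<^sup>2 - (g c + L c y)\<^sup>2) / (2 * real k))"
    unfolding phiq_def Phi_quad_def sum_subtractf[symmetric]
    by (intro sum.cong refl) (simp add: sum_subtractf right_diff_distrib diff_divide_distrib)
  also have "\<dots> = (\<Sum>y<k. \<Sum>c<k. q y * ((f c - g c)\<^sup>2 + 2 * (f c - g c) * (g c + L c y))) / (2 * real k)"
    by (simp add: square_diff sum_divide_distrib sum_distrib_left)
  also have "\<dots> = (\<Sum>c<k. \<Sum>y<k. q y * ((f c - g c)\<^sup>2 + 2 * (f c - g c) * (g c + L c y))) / (2 * real k)"
    by (subst sum.swap) (rule refl)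
  also have "\<dots> = (\<Sum>c<k. (f c - g c)\<^sup>2 + 2 * (f c - g c) * (g c + cond_loss k L q c)) / (2 * real k)"
  proof -
    have "(\<Sum>y<k. q y * (a + d * (x + L c y))) = a + d * (x + cond_loss k L q c)" for a d x c
    proof -
      have "(\<Sum>y<k. q y * (a + d * (x + L c y))) = (a + d * x) * (\<Sum>y<k. q y) + d * (\<Sum>y<k. q y * L c y)"
        by (simp add: sum.distrib sum_distrib_left sum_distrib_right algebra_simps)
      then show ?thesis unfolding q1 cond_loss_def by (simp add: algebra_simps)
    qed
    then show ?thesis by (simp add: mult.assoc)
  qed
  finally show ?thesis .
qed

text \<open>The orthogonality hypothesis is the normal equation saying that \<open>f0\<close> is the orthogonal
  projection of \<open>-cond_loss k L q\<close> onto \<open>F\<close>.\<close>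

lemma excess_phi_quad_eq:
  assumes q1: "(\<Sum>y<k. q y) = 1" and f0: "f0 \<in> F"
    and orth: "\<And>g. g \<in> F \<Longrightarrow> (\<Sum>c<k. (g c - f0 c) * (f0 c + cond_loss k L q c)) = 0"
    and f: "f \<in> F"
  shows "excess_phi k (Phi_quad k L) F f q = ereal ((\<Sum>c<k. (f c - f0 c)\<^sup>2) / (2 * real k))"
proof -
  let ?\<phi> = "\<lambda>g. phiq k (Phi_quad k L) g q"
  have gap: "?\<phi> g - ?\<phi> f0 = (\<Sum>c<k. (g c - f0 c)\<^sup>2) / (2 * real k)" if "g \<in> F" for g
  proof -
    have "(\<Sum>c<k. 2 * (g c - f0 c) * (f0 c + cond_loss k L q c))
        = 2 * (\<Sum>c<k. (g c - f0 c) * (f0 c + cond_loss k L q c))"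
      by (simp add: sum_distrib_left algebra_simps)
    then show ?thesis
      using orth[OF that] unfolding phiq_Phi_quad_diff[OF q1] by (simp add: sum.distrib)
  qed
  have "(INF g\<in>F. ereal (?\<phi> g)) = ereal (?\<phi> f0)"
  proof (rule antisym)
    show "(INF g\<in>F. ereal (?\<phi> g)) \<le> ereal (?\<phi> f0)"
      using f0 by (rule INF_lower)
    have "?\<phi> f0 \<le> ?\<phi> g" if "g \<in> F" for g
    proof -
      have "0 \<le> (\<Sum>c<k. (g c - f0 c)\<^sup>2) / (2 * real k)"
        by (simp add: sum_nonneg)
      then show ?thesis using gap[OF that] by linarith
    qed
    then show "ereal (?\<phi> f0) \<le> (INF g\<in>F. ereal (?\<phi> g))"
      by (intro INF_greatest) simp
  qed
  then show ?thesis
    unfolding excess_phi_def using gap[OF f] by simp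
qed

lemma sum_squares_ge_half_gap:
  fixes x :: "'a \<Rightarrow> real"
  assumes "finite S" and "i \<in> S" and "j \<in> S" and "i \<noteq> j"
    and "0 \<le> d" and "d \<le> x i - x j"
  shows "d\<^sup>2 / 2 \<le> (\<Sum>a\<in>S. (x a)\<^sup>2)"
proof -
  have "d\<^sup>2 \<le> (x i - x j)\<^sup>2"
    using assms(5,6) by (intro power_mono) auto
  also have "\<dots> \<le> 2 * ((x i)\<^sup>2 + (x j)\<^sup>2)"
    using sum_squares_ge_zero[of "x i + x j" 0] by (simp add: power2_eq_square algebra_simps)
  also have "(x i)\<^sup>2 + (x j)\<^sup>2 = (\<Sum>a\<in>{i, j}. (x a)\<^sup>2)"
    using assms(4) by simp
  also have "\<dots> \<le> (\<Sum>a\<in>S. (x a)\<^sup>2)"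
    using assms(1-3) by (intro sum_mono2) auto
  finally show ?thesis by simp
qed

locale equal_blocks =
  fixes k b s :: nat and blk :: "nat \<Rightarrow> nat"
  assumes b_ge_2: "2 \<le> b" and s_ge_2: "2 \<le> s" and k_eq: "k = b * s"
    and blk_lt: "\<And>c. c < k \<Longrightarrow> blk c < b"
    and card_block: "\<And>j. j < b \<Longrightarrow> card {c. c < k \<and> blk c = j} = s"
begin

abbreviation block :: "nat \<Rightarrow> nat set" where
  "block j \<equiv> {c. c < k \<and> blk c = j}"

definition block_mass :: "(nat \<Rightarrow> real) \<Rightarrow> nat \<Rightarrow> real" where
  "block_mass q j = sum q (block j)"

lemma k_pos: "0 < k"
  using b_ge_2 s_ge_2 k_eq by simp

lemma sum_by_blocks: "(\<Sum>c<k. h (blk c) * q c) = (\<Sum>j<b. h j * block_mass q j)"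
proof -
  have "(\<Sum>c<k. h (blk c) * q c) = (\<Sum>j<b. \<Sum>c\<in>{c \<in> {..<k}. blk c = j}. h (blk c) * q c)"
    by (rule sum.group[symmetric]) (use blk_lt in auto)
  also have "\<dots> = (\<Sum>j<b. h j * block_mass q j)"
    unfolding block_mass_def sum_distrib_left by (intro sum.cong refl) auto
  finally show ?thesis .
qed

lemma sum_block_const: "(\<Sum>c<k. h (blk c)) = real s * (\<Sum>j<b. h j)"
  using sum_by_blocks[of h "\<lambda>_. 1"] card_block
  by (simp add: block_mass_def sum_distrib_left mult.commute)

lemma block_nonempty:
  assumes "j < b"
  obtains c where "c < k" and "blk c = j"
proof -
  have "block j \<noteq> {}" using card_block[OF assms] s_ge_2 by (intro notI) simp
  then show thesis using that by blast
qed

lemma other_in_block: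
  assumes "c < k"
  obtains c' where "c' < k" and "blk c' = blk c" and "c' \<noteq> c"
proof -
  have "card (block (blk c)) = s" using card_block blk_lt assms by blast
  then have "\<not> block (blk c) \<subseteq> {c}"
    using s_ge_2 card_mono[of "{c}" "block (blk c)"] by auto
  then show thesis using that by blast
qed

lemma block_const_in_col_span:
  assumes h: "\<forall>c<k. f c = h (blk c)" and zero: "\<forall>c\<ge>k. f c = 0"
  shows "f \<in> col_span k (L01b blk)"
proof -
  \<comment> \<open>Spread the block weights \<open>\<beta> B\<close> evenly over the block; column \<open>j\<close> of \<open>L01b\<close> is the
    indicator of the complement of the block of \<open>j\<close>, so \<open>h B = (\<Sum>\<beta>) - \<beta> B\<close> must be solved.\<close>
  define H where "H = (\<Sum>B<b. h B)"
  define \<beta> where "\<beta> B = H / (real b - 1) - h B" for B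
  have "f c = (\<Sum>j<k. \<beta> (blk j) / real s * L01b blk c j)" if c: "c < k" for c
  proof -
    have "(\<Sum>j<k. \<beta> (blk j) / real s * L01b blk c j)
        = real s * (\<Sum>B<b. \<beta> B / real s * (if B \<noteq> blk c then 1 else 0))"
      unfolding L01b_def by (subst sum_block_const[symmetric]) (simp add: eq_commute)
    also have "\<dots> = (\<Sum>B<b. \<beta> B - (if B = blk c then \<beta> B else 0))"
      using s_ge_2 unfolding sum_distrib_left by (intro sum.cong) auto
    also have "\<dots> = (\<Sum>B<b. \<beta> B) - \<beta> (blk c)"
      using blk_lt[OF c] by (simp add: sum_subtractf)
    also have "\<dots> = h (blk c)"
    proof -
      have "(\<Sum>B<b. \<beta> B) = real b * (H / (real b - 1)) - H"
        unfolding \<beta>_def H_def by (simp add: sum_subtractf)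
      also have "\<dots> = H / (real b - 1)"
      proof -
        have "real b - 1 \<noteq> 0" using b_ge_2 by simp
        then show ?thesis by (simp add: field_simps)
      qed
      finally show ?thesis by (simp add: \<beta>_def[of "blk c"])
    qed
    finally show ?thesis using h c by simp
  qed
  then show ?thesis
    unfolding col_span_def mem_Collect_eq using zero
    by (intro conjI exI[of _ "\<lambda>j. \<beta> (blk j) / real s"]) auto
qed

lemma col_span_L01b_iff:
  "f \<in> col_span k (L01b blk) \<longleftrightarrow> (\<exists>h. \<forall>c<k. f c = h (blk c)) \<and> (\<forall>c\<ge>k. f c = 0)"
proof
  assume "f \<in> col_span k (L01b blk)"
  then obtain a where a: "\<forall>c<k. f c = (\<Sum>j<k. a j * L01b blk c j)" and "\<forall>c\<ge>k. f c = 0"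
    unfolding col_span_def by auto
  moreover have "\<forall>c<k. f c = (\<lambda>B. \<Sum>j<k. a j * (if B \<noteq> blk j then 1 else 0)) (blk c)"
    using a unfolding L01b_def by simp
  ultimately show "(\<exists>h. \<forall>c<k. f c = h (blk c)) \<and> (\<forall>c\<ge>k. f c = 0)" by (intro conjI exI)
qed (use block_const_in_col_span in blast)

lemma pred_le_same_block:
  assumes h: "\<forall>c<k. f c = h (blk c)" and c: "c < k" and same: "blk c = blk (pred k f)"
  shows "pred k f \<le> c"
proof (rule pred_le[OF c])
  have "f c = f (pred k f)"
    using h c same pred_spec(1)[OF k_pos] by simp
  then show "f c' \<le> f c" if "c' < k" for c'
    using pred_spec(2)[OF k_pos that] by simp
qed

lemma block_mass_ge:
  "q \<in> label_simplex k \<Longrightarrow> c < k \<Longrightarrow> q c \<le> block_mass q (blk c)"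
  unfolding block_mass_def label_simplex_def by (rule member_le_sum) auto

lemma block_mass_add_le_1:
  assumes q: "q \<in> label_simplex k" and ne: "i \<noteq> j"
  shows "block_mass q i + block_mass q j \<le> 1"
proof -
  have "block_mass q i + block_mass q j = sum q (block i \<union> block j)"
    unfolding block_mass_def using ne by (subst sum.union_disjoint) auto
  also have "\<dots> \<le> sum q {..<k}"
    using q unfolding label_simplex_def by (intro sum_mono2) auto
  also have "\<dots> = 1" using q unfolding label_simplex_def by auto
  finally show ?thesis .
qed

lemma pred_block_indicator:
  assumes "j < b"
  shows "pred k (\<lambda>c. if c < k \<and> blk c = j then 1 else 0) = (LEAST c. c < k \<and> blk c = j)"
    (is "pred k ?g = ?m")
proof -
  obtain c0 where "c0 < k" "blk c0 = j" using block_nonempty[OF assms] .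
  then have m: "?m < k" "blk ?m = j"
    using LeastI[of "\<lambda>c. c < k \<and> blk c = j" c0] by auto
  have "pred k ?g \<le> ?m"
    using m by (intro pred_le) auto
  moreover have "1 \<le> ?g (pred k ?g)"
    using pred_spec(2)[OF k_pos m(1), of ?g] m by simp
  then have "?m \<le> pred k ?g"
    using pred_spec(1)[OF k_pos] by (intro Least_le) (auto split: if_splits)
  ultimately show ?thesis by simp
qed

lemma two_labels_in_two_blocks:
  obtains c1 c2 where "c1 < k" and "c2 < k" and "blk c1 = blk 0" and "c1 \<noteq> 0"
    and "blk c2 \<noteq> blk 0" and "c2 = (LEAST c. c < k \<and> blk c = blk c2)"
proof -
  obtain c1 where c1: "c1 < k" "blk c1 = blk 0" "c1 \<noteq> 0"
    using other_in_block[OF k_pos] by metis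
  define B2 where "B2 = (if blk 0 = 0 then 1 else (0::nat))"
  have B2: "B2 < b" "B2 \<noteq> blk 0"
    unfolding B2_def using b_ge_2 by auto
  define c2 where "c2 = (LEAST c. c < k \<and> blk c = B2)"
  obtain c0 where "c0 < k" "blk c0 = B2" using block_nonempty[OF B2(1)] .
  then have "c2 < k" "blk c2 = B2"
    unfolding c2_def using LeastI[of "\<lambda>c. c < k \<and> blk c = B2" c0] by auto
  then show thesis
    using that[OF c1(1) _ c1(2,3)] B2(2) unfolding c2_def by simp
qed

lemma block_mass_two_point:
  assumes "c \<noteq> c'"
  shows "block_mass (\<lambda>y. (if y = c then x else 0) + (if y = c' then x' else 0)) j
     = (if c < k \<and> blk c = j then x else 0) + (if c' < k \<and> blk c' = j then x' else 0)"
  unfolding block_mass_def sum.distrib using assms by (simp add: sum.delta)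

end

locale block_loss = equal_blocks +
  fixes \<eta> :: real
  assumes \<eta>_nonneg: "0 \<le> \<eta>" and \<eta>_le_1: "\<eta> \<le> 1"
begin

abbreviation scores :: "(nat \<Rightarrow> real) set" where
  "scores \<equiv> col_span k (L01b blk)"

abbreviation loss :: "nat \<Rightarrow> nat \<Rightarrow> real" where
  "loss \<equiv> L01b_eta blk \<eta>"

abbreviation surrogate :: "(nat \<Rightarrow> real) \<Rightarrow> nat \<Rightarrow> real" where
  "surrogate \<equiv> Phi_quad k loss"

lemma cond_loss_eq:
  assumes q: "q \<in> label_simplex k" and c: "c < k"
  shows "cond_loss k loss q c = \<eta> * (1 - q c) + (1 - \<eta>) * (1 - block_mass q (blk c))"
proof -
  have q1: "(\<Sum>y<k. q y) = 1" using q unfolding label_simplex_def by auto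
  have mass: "(\<Sum>y<k. if blk y = blk c then q y else 0) = block_mass q (blk c)"
  proof -
    have "{y \<in> {..<k}. blk y = blk c} = block (blk c)" by auto
    then show ?thesis
      unfolding block_mass_def by (simp add: sum.inter_filter[symmetric])
  qed
  have "cond_loss k loss q c = (\<Sum>y<k. q y - \<eta> * (if y = c then q y else 0)
         - (1 - \<eta>) * (if blk y = blk c then q y else 0))"
    unfolding cond_loss_def L01b_eta_def L01_def L01b_def
    by (intro sum.cong) (auto simp: algebra_simps)
  also have "\<dots> = (\<Sum>y<k. q y) - \<eta> * (\<Sum>y<k. if y = c then q y else 0)
         - (1 - \<eta>) * (\<Sum>y<k. if blk y = blk c then q y else 0)"
    by (simp only: sum_subtractf sum_distrib_left)
  also have "\<dots> = \<eta> * (1 - q c) + (1 - \<eta>) * (1 - block_mass q (blk c))"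
  proof -
    have "(\<Sum>y<k. if y = c then q y else 0) = q c" using c by simp
    then show ?thesis unfolding mass q1 by (simp add: algebra_simps)
  qed
  finally show ?thesis .
qed

definition alpha :: real where
  "alpha = \<eta> / real s + 1 - \<eta>"

lemma alpha_pos: "0 < alpha"
proof (cases "\<eta> = 1")
  case True
  show ?thesis unfolding alpha_def using True s_ge_2 by simp
next
  case False
  then have "\<eta> < 1" using \<eta>_le_1 by simp
  moreover have "0 \<le> \<eta> / real s" using \<eta>_nonneg by simp
  ultimately show ?thesis unfolding alpha_def by linarith
qed

definition surrogate_minimizer :: "(nat \<Rightarrow> real) \<Rightarrow> nat \<Rightarrow> real" where
  "surrogate_minimizer q c = (if c < k then alpha * block_mass q (blk c) - 1 else 0)"

lemma surrogate_minimizer_in_scores: "surrogate_minimizer q \<in> scores"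
  unfolding col_span_L01b_iff surrogate_minimizer_def by auto

lemma surrogate_minimizer_orthogonal:
  assumes q: "q \<in> label_simplex k" and g: "g \<in> scores"
  shows "(\<Sum>c<k. (g c - surrogate_minimizer q c) * (surrogate_minimizer q c + cond_loss k loss q c)) = 0"
proof -
  obtain h where h: "\<forall>c<k. g c = h (blk c)"
    using g col_span_L01b_iff by blast
  define \<delta> where "\<delta> B = h B - (alpha * block_mass q B - 1)" for B
  have "(\<Sum>c<k. (g c - surrogate_minimizer q c) * (surrogate_minimizer q c + cond_loss k loss q c))
      = \<eta> / real s * (\<Sum>c<k. \<delta> (blk c) * block_mass q (blk c)) - \<eta> * (\<Sum>c<k. \<delta> (blk c) * q c)"
    unfolding sum_distrib_left sum_subtractf[symmetric]
    by (intro sum.cong refl) (simp add: h \<delta>_def surrogate_minimizer_def cond_loss_eq[OF q] alpha_def algebra_simps)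
  also have "\<dots> = 0"
    using sum_block_const[of "\<lambda>B. \<delta> B * block_mass q B"] sum_by_blocks[of \<delta> q] s_ge_2
    by simp
  finally show ?thesis .
qed

lemma excess_phi_blockwise:
  assumes q: "q \<in> label_simplex k" and f: "f \<in> scores" and h: "\<forall>c<k. f c = h (blk c)"
  shows "excess_phi k surrogate scores f q
     = ereal ((\<Sum>B<b. (h B + 1 - alpha * block_mass q B)\<^sup>2) / (2 * real b))"
proof -
  have "(\<Sum>y<k. q y) = 1" using q unfolding label_simplex_def by auto
  then have "excess_phi k surrogate scores f q = ereal ((\<Sum>c<k. (f c - surrogate_minimizer q c)\<^sup>2) / (2 * real k))"
    using surrogate_minimizer_in_scores surrogate_minimizer_orthogonal[OF q] f by (rule excess_phi_quad_eq)
  also have "(\<Sum>c<k. (f c - surrogate_minimizer q c)\<^sup>2) = real s * (\<Sum>B<b. (h B + 1 - alpha * block_mass q B)\<^sup>2)"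
    by (subst sum_block_const[symmetric]) (simp add: h surrogate_minimizer_def algebra_simps)
  finally show ?thesis
    using s_ge_2 by (simp add: k_eq)
qed

definition margin :: "real \<Rightarrow> real" where
  "margin \<epsilon> = (\<epsilon> - \<eta> / 2) / (1 - \<eta> / 2)"

definition calib_value :: "real \<Rightarrow> real" where
  "calib_value \<epsilon> = (alpha * margin \<epsilon>)\<^sup>2 / (4 * real b)"

lemma margin_nonneg: "\<eta> / 2 \<le> \<epsilon> \<Longrightarrow> 0 \<le> margin \<epsilon>"
  unfolding margin_def using \<eta>_le_1 by simp

lemma calib_value_pos: "\<eta> / 2 < \<epsilon> \<Longrightarrow> 0 < calib_value \<epsilon>"
  unfolding calib_value_def margin_def using alpha_pos \<eta>_le_1 b_ge_2 by simp

lemma mass_gap_ge_margin: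
  assumes q: "q \<in> label_simplex k" and c: "c < k" and c': "c' < k" and ne: "blk c \<noteq> blk c'"
    and gap: "\<epsilon> \<le> cond_loss k loss q c - cond_loss k loss q c'"
  shows "margin \<epsilon> \<le> block_mass q (blk c') - block_mass q (blk c)"
proof -
  define D where "D = block_mass q (blk c') - block_mass q (blk c)"
  have "\<epsilon> \<le> \<eta> * (q c' - q c) + (1 - \<eta>) * D"
    using gap unfolding cond_loss_eq[OF q c] cond_loss_eq[OF q c'] D_def by (simp add: algebra_simps)
  \<comment> \<open>the two blocks carry mass at most 1, so \<open>q c' \<le> block_mass q (blk c') \<le> (1 + D) / 2\<close>\<close>
  moreover have "\<eta> * (q c' - q c) \<le> \<eta> * ((1 + D) / 2)"
    using block_mass_ge[OF q c'] block_mass_add_le_1[OF q ne] q c \<eta>_nonneg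
    unfolding D_def label_simplex_def by (intro mult_left_mono) auto
  ultimately have "\<epsilon> - \<eta> / 2 \<le> D * (1 - \<eta> / 2)"
    by (simp add: algebra_simps)
  then show ?thesis
    unfolding margin_def D_def using \<eta>_le_1 by (simp add: pos_divide_le_eq)
qed

lemma excess_phi_ge_calib_value:
  assumes f: "f \<in> scores" and q: "q \<in> label_simplex k"
    and el: "ereal \<epsilon> \<le> excess_loss k loss scores f q" and \<epsilon>: "\<eta> / 2 \<le> \<epsilon>"
  shows "ereal (calib_value \<epsilon>) \<le> excess_phi k surrogate scores f q"
proof (cases "\<epsilon> = \<eta> / 2")
  case True
  then have "calib_value \<epsilon> = 0" by (simp add: calib_value_def margin_def)
  then show ?thesis using excess_phi_nonneg[OF f] by (simp add: zero_ereal_def[symmetric])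
next
  case False
  with \<epsilon> \<eta>_nonneg have "0 < \<epsilon>" by simp
  obtain h where h: "\<forall>c<k. f c = h (blk c)"
    using f col_span_L01b_iff by blast
  have "scores \<noteq> {}" using surrogate_minimizer_in_scores by blast
  then obtain g where g: "g \<in> scores"
    and el_g: "excess_loss k loss scores f q = ereal (lossq k loss f q - lossq k loss g q)"
    by (rule excess_loss_attained[OF k_pos])
  obtain hg where hg: "\<forall>c<k. g c = hg (blk c)"
    using g col_span_L01b_iff by blast
  define c where "c = pred k f"
  define c' where "c' = pred k g"
  have c: "c < k" and c': "c' < k"
    unfolding c_def c'_def using pred_spec(1)[OF k_pos] by auto
  have gap: "\<epsilon> \<le> cond_loss k loss q c - cond_loss k loss q c'"
    using el unfolding el_g c_def c'_def by (simp add: lossq_eq_cond_loss)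
  have ne: "blk c \<noteq> blk c'"
  proof
    assume "blk c = blk c'"
    then have "c = c'"
      using pred_le_same_block[OF h c'] pred_le_same_block[OF hg c] unfolding c_def c'_def
      by fastforce
    then show False using gap \<open>0 < \<epsilon>\<close> by simp
  qed
  have "h (blk c') \<le> h (blk c)"
    using pred_spec(2)[OF k_pos c', of f] h c c' unfolding c_def by simp
  then have "alpha * margin \<epsilon> \<le> (h (blk c) + 1 - alpha * block_mass q (blk c))
      - (h (blk c') + 1 - alpha * block_mass q (blk c'))"
    using mult_left_mono[OF mass_gap_ge_margin[OF q c c' ne gap], of alpha] alpha_pos
    by (simp add: algebra_simps)
  then have "(alpha * margin \<epsilon>)\<^sup>2 / 2 \<le> (\<Sum>B<b. (h B + 1 - alpha * block_mass q B)\<^sup>2)"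
    using blk_lt[OF c] blk_lt[OF c'] ne margin_nonneg[OF \<epsilon>] alpha_pos
    by (intro sum_squares_ge_half_gap) auto
  then show ?thesis
    unfolding excess_phi_blockwise[OF q f h] calib_value_def using b_ge_2 by (simp add: field_simps)
qed

lemma excess_phi_raised_blocks:
  assumes q: "q \<in> label_simplex k" and B: "B1 < b" "B2 < b" "B1 \<noteq> B2"
    and mass: "block_mass q B1 + block_mass q B2 = 1"
    and mass_other: "\<And>j. j \<noteq> B1 \<Longrightarrow> j \<noteq> B2 \<Longrightarrow> block_mass q j = 0"
  defines "h \<equiv> \<lambda>j. if j = B1 \<or> j = B2 then alpha / 2 - 1 else -1"
  shows "excess_phi k surrogate scores (\<lambda>c. if c < k then h (blk c) else 0) q
       = ereal ((alpha * (block_mass q B2 - block_mass q B1))\<^sup>2 / (4 * real b))"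
proof -
  define t where "t = alpha * (block_mass q B2 - block_mass q B1) / 2"
  have "alpha = alpha * block_mass q B1 + alpha * block_mass q B2"
    using mass by (metis distrib_left mult_1_right)
  then have "h B1 + 1 - alpha * block_mass q B1 = t" and "h B2 + 1 - alpha * block_mass q B2 = - t"
    unfolding h_def t_def by (simp_all add: field_simps)
  then have square_term: "(h j + 1 - alpha * block_mass q j)\<^sup>2 = (if j = B1 then t\<^sup>2 else 0) + (if j = B2 then t\<^sup>2 else 0)"
    for j
    using B(3) mass_other[of j] unfolding h_def by (cases "j = B1 \<or> j = B2") auto
  have "(\<Sum>j<b. (h j + 1 - alpha * block_mass q j)\<^sup>2) = 2 * t\<^sup>2"
    unfolding square_term using B by (simp add: sum.distrib)
  moreover have "(\<lambda>c. if c < k then h (blk c) else 0) \<in> scores"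
    unfolding col_span_L01b_iff by auto
  ultimately show ?thesis
    using excess_phi_blockwise[OF q, of _ h] unfolding t_def by (simp add: power_divide field_split_simps)
qed

lemma calib_value_attained:
  assumes \<epsilon>: "\<eta> / 2 \<le> \<epsilon>" "\<epsilon> \<le> 1"
  obtains f q where "f \<in> scores" and "q \<in> label_simplex k"
    and "ereal \<epsilon> \<le> excess_loss k loss scores f q"
    and "excess_phi k surrogate scores f q = ereal (calib_value \<epsilon>)"
proof -
  obtain c1 c2 where c: "c1 < k" "c2 < k" "blk c1 = blk 0" "c1 \<noteq> 0" "blk c2 \<noteq> blk 0"
    and c2_least: "c2 = (LEAST c. c < k \<and> blk c = blk c2)"
    by (rule two_labels_in_two_blocks)
  define B1 where "B1 = blk 0"
  define B2 where "B2 = blk c2"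
  have B: "B1 < b" "B2 < b" "B1 \<noteq> B2"
    using blk_lt[OF k_pos] blk_lt[OF c(2)] c unfolding B1_def B2_def by auto
  have c_ne: "c1 \<noteq> c2" "c2 \<noteq> 0"
    using c(3,5) by metis+
  \<comment> \<open>\<open>q\<close> puts mass \<open>x\<close> on \<open>c1\<close>, which shares the block of label 0 (predicted by \<open>f\<close>)
    without being 0, and mass \<open>x + margin \<epsilon>\<close> on \<open>c2\<close> (predicted by \<open>g\<close>)\<close>
  define D where "D = margin \<epsilon>"
  define x where "x = (1 - D) / 2"
  have D: "0 \<le> D" "D \<le> 1" "\<eta> / 2 + D * (1 - \<eta> / 2) = \<epsilon>"
    unfolding D_def margin_def using \<epsilon> \<eta>_le_1 by (auto simp: divide_le_eq)
  define q where "q y = (if y = c1 then x else 0) + (if y = c2 then x + D else 0)" for y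
  have q: "q \<in> label_simplex k"
    unfolding label_simplex_def q_def x_def using c c_ne D by (auto simp: sum.distrib)
  have mass: "block_mass q j = (if j = B1 then x else 0) + (if j = B2 then x + D else 0)" for j
    unfolding q_def using block_mass_two_point[OF c_ne(1)] c unfolding B1_def B2_def by auto
  define h where "h j = (if j = B1 \<or> j = B2 then alpha / 2 - 1 else -1)" for j
  define f where "f c = (if c < k then h (blk c) else 0)" for c
  define g where "g c = (if c < k \<and> blk c = B2 then 1 else (0::real))" for c
  have f: "f \<in> scores"
    unfolding col_span_L01b_iff f_def by auto
  have g: "g \<in> scores"
    unfolding col_span_L01b_iff g_def by (auto intro!: exI[of _ "\<lambda>j. if j = B2 then 1 else 0"])
  have pred_f: "pred k f = 0"
    using alpha_pos k_pos unfolding f_def h_def B1_def by (intro le_antisym pred_le) auto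
  have "lossq k loss f q = \<eta> + (1 - \<eta>) * (1 - x)"
    unfolding lossq_eq_cond_loss pred_f cond_loss_eq[OF q k_pos] mass using c_ne c B(3)
    by (simp add: q_def B1_def)
  moreover have pred_g: "pred k g = c2"
    unfolding g_def pred_block_indicator[OF B(2)] using c2_least unfolding B2_def by simp
  have "lossq k loss g q = 1 - x - D"
    unfolding lossq_eq_cond_loss pred_g cond_loss_eq[OF q c(2)] mass using c c_ne B(3)
    by (simp add: q_def B2_def algebra_simps)
  ultimately have "\<epsilon> = lossq k loss f q - lossq k loss g q"
    using D(3) unfolding x_def by (simp add: algebra_simps add_divide_distrib diff_divide_distrib)
  then have "ereal \<epsilon> \<le> excess_loss k loss scores f q"
    using excess_loss_ge_diff[OF g] by simp
  moreover have "excess_phi k surrogate scores f q = ereal (calib_value \<epsilon>)"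
    using excess_phi_raised_blocks[OF q B] B(3) unfolding f_def h_def mass calib_value_def D_def[symmetric]
    by (simp add: x_def)
  ultimately show thesis using that f q by blast
qed

lemma calib_eq_calib_value:
  assumes "\<eta> / 2 \<le> \<epsilon>" and "\<epsilon> \<le> 1"
  shows "calib k surrogate loss scores \<epsilon> = ereal (calib_value \<epsilon>)"
proof (rule antisym)
  obtain f q where "f \<in> scores" "q \<in> label_simplex k" "ereal \<epsilon> \<le> excess_loss k loss scores f q"
    and "excess_phi k surrogate scores f q = ereal (calib_value \<epsilon>)"
    using calib_value_attained[OF assms] .
  then show "calib k surrogate loss scores \<epsilon> \<le> ereal (calib_value \<epsilon>)"
    by (metis calib_le_excess_phi)
  show "ereal (calib_value \<epsilon>) \<le> calib k surrogate loss scores \<epsilon>"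
    using excess_phi_ge_calib_value assms(1) by (intro calib_geI)
qed

lemma calib_eq_0:
  assumes "\<epsilon> \<le> \<eta> / 2"
  shows "calib k surrogate loss scores \<epsilon> = 0"
proof (rule antisym)
  have "calib k surrogate loss scores \<epsilon> \<le> calib k surrogate loss scores (\<eta> / 2)"
    using assms by (rule calib_mono)
  also have "\<dots> = 0"
    using calib_eq_calib_value[of "\<eta> / 2"] \<eta>_le_1 by (simp add: calib_value_def margin_def)
  finally show "calib k surrogate loss scores \<epsilon> \<le> 0" .
qed (rule calib_nonneg)

lemma consistent_upto_half_eta: "consistent_upto k surrogate loss scores (\<eta> / 2)"
  unfolding consistent_upto_def
proof (intro conjI allI impI exI)
  fix \<epsilon> :: real
  assume "\<eta> / 2 < \<epsilon>"
  then have "0 < ereal (calib_value \<epsilon>)" using calib_value_pos by simp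
  also have "\<dots> \<le> calib k surrogate loss scores \<epsilon>"
    using excess_phi_ge_calib_value \<open>\<eta> / 2 < \<epsilon>\<close> by (intro calib_geI) simp
  finally show "0 < calib k surrogate loss scores \<epsilon>" .
next
  show "\<eta> / 2 < 1" and "\<bar>calib k surrogate loss scores 1\<bar> \<noteq> \<infinity>"
    using calib_eq_calib_value[of 1] \<eta>_le_1 by simp_all
qed

lemma calib_value_eq:
  "calib_value \<epsilon> = (\<epsilon> - \<eta> / 2)\<^sup>2 / (4 * real b) * (\<eta> * real b / real k + 1 - \<eta>)\<^sup>2 / (1 - \<eta> / 2)\<^sup>2"
proof -
  have "\<eta> * real b / real k = \<eta> / real s"
    using b_ge_2 by (simp add: k_eq)
  then show ?thesis
    unfolding calib_value_def margin_def alpha_def by (simp add: power_mult_distrib power_divide mult_ac)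
qed

end

theorem proposition17:
  fixes k b s :: nat and blk :: "nat \<Rightarrow> nat" and \<eta> :: real
  assumes "b \<ge> 2" and "s \<ge> 2" and "k = b * s"
    and "\<forall>c<k. blk c < b"
    and "\<forall>j<b. card {c. c < k \<and> blk c = j} = s"
    and "0 \<le> \<eta>" and "\<eta> \<le> 1"
  shows "(\<forall>\<epsilon>. \<eta> / 2 \<le> \<epsilon> \<and> \<epsilon> \<le> 1 \<longrightarrow>
            calib k (Phi_quad k (L01b_eta blk \<eta>)) (L01b_eta blk \<eta>) (col_span k (L01b blk)) \<epsilon>
            = ereal ((\<epsilon> - \<eta> / 2)\<^sup>2 / (4 * real b)
                     * (\<eta> * real b / real k + 1 - \<eta>)\<^sup>2 / (1 - \<eta> / 2)\<^sup>2))
       \<and> (\<forall>\<epsilon>. 0 \<le> \<epsilon> \<and> \<epsilon> \<le> \<eta> / 2 \<longrightarrow>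
            calib k (Phi_quad k (L01b_eta blk \<eta>)) (L01b_eta blk \<eta>) (col_span k (L01b blk)) \<epsilon> = 0)
       \<and> consistent_upto k (Phi_quad k (L01b_eta blk \<eta>)) (L01b_eta blk \<eta>) (col_span k (L01b blk)) (\<eta> / 2)"
proof -
  interpret block_loss k b s blk \<eta>
    using assms by unfold_locales auto
  show ?thesis
    using calib_eq_calib_value calib_eq_0 consistent_upto_half_eta
    by (simp add: calib_value_eq)
qed

end
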